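(* Let $(B,\lfloor\cdot,\cdot\rfloor)$ be an SSD space with quadratic form $q$ and let $A\subset B$ be $q$-positive. If $\Phi_A(b)\ge q(b)$ for all $b\in\operatorname{conv}^w A$, then $G_{\Phi_A}=\mathcal{P}_q(\Phi_A^{@})$.
   Context: An SSD space is a pair $(B,\lfloor\cdot,\cdot\rfloor)$ with $B$ a nonzero real vector space and $\lfloor\cdot,\cdot\rfloor$ a symmetric bilinear form; $q(b)=\frac12\lfloor b,b\rfloor$. $w(B,B)$ is the coarsest topology on $B$ making all maps $b\mapsto\lfloor b,c\rfloor$ continuous; $\operatorname{conv}^w A$ is the $w(B,B)$-closure of the convex hull of $A$. A nonempty $A\subset B$ is $q$-positive if $q(b-c)\ge0$ for all $b,c\in A$. $\Phi_A(x)=\sup_{a\in A}\{\lfloor x,a\rfloor-q(a)\}$. For proper convex $f$, $f^{@}(b)=\sup_{c\in B}\{\lfloor c,b\rfloor-f(c)\}$, $\mathcal{P}_q(f)=\{b: f(b)=q(b)\}$, $G_f=\{b: f(b)+f^{@}(b)=\lfloor b,b\rfloor\}$. *)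

theory Defs
  imports "HOL-Analysis.Analysis"
begin

definition SSD_space :: "('a::real_vector \<Rightarrow> 'a \<Rightarrow> real) \<Rightarrow> bool" where
  "SSD_space s \<longleftrightarrow> (\<exists>x::'a. x \<noteq> 0) \<and> (\<forall>b c. s b c = s c b)
     \<and> (\<forall>c. linear (\<lambda>b. s b c))"

definition qf :: "('a \<Rightarrow> 'a \<Rightarrow> real) \<Rightarrow> 'a \<Rightarrow> real" where
  "qf s b = s b b / 2"

definition wtop :: "('a \<Rightarrow> 'a \<Rightarrow> real) \<Rightarrow> 'a topology" where
  "wtop s = topology_generated_by {{b. s b c \<in> U} | c U. open U}"

definition convw :: "('a::real_vector \<Rightarrow> 'a \<Rightarrow> real) \<Rightarrow> 'a set \<Rightarrow> 'a set" where
  "convw s A = (wtop s) closure_of (convex hull A)"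

definition q_positive :: "('a::real_vector \<Rightarrow> 'a \<Rightarrow> real) \<Rightarrow> 'a set \<Rightarrow> bool" where
  "q_positive s A \<longleftrightarrow> A \<noteq> {} \<and> (\<forall>b\<in>A. \<forall>c\<in>A. qf s (b - c) \<ge> 0)"

definition PhiA :: "('a \<Rightarrow> 'a \<Rightarrow> real) \<Rightarrow> 'a set \<Rightarrow> 'a \<Rightarrow> ereal" where
  "PhiA s A x = (SUP a\<in>A. ereal (s x a - qf s a))"

definition fenchel_at :: "('a \<Rightarrow> 'a \<Rightarrow> real) \<Rightarrow> ('a \<Rightarrow> ereal) \<Rightarrow> 'a \<Rightarrow> ereal" where
  "fenchel_at s f b = (SUP c. ereal (s c b) - f c)"

definition Pq :: "('a \<Rightarrow> 'a \<Rightarrow> real) \<Rightarrow> ('a \<Rightarrow> ereal) \<Rightarrow> 'a set" where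
  "Pq s f = {b. f b = ereal (qf s b)}"

definition Gf :: "('a \<Rightarrow> 'a \<Rightarrow> real) \<Rightarrow> ('a \<Rightarrow> ereal) \<Rightarrow> 'a set" where
  "Gf s f = {b. f b + fenchel_at s f b = ereal (s b b)}"

end

theory Submission
  imports Defs
begin

text \<open>By q-positivity \<open>\<Phi>\<^sub>A\<close> equals q on A, so \<open>\<Phi>\<^sub>A \<le> \<Phi>\<^sub>A\<^sup>@\<close>.
If b lies outside the weak closure of conv A, a basic weak neighbourhood of b misses conv A, i.e.
finitely many functionals \<open>\<lfloor>\<cdot>,c\<rfloor>\<close> keep conv A - b away from 0; the point of least Euclidean
norm in the closure of its image under these functionals gives a direction c separating b from A,
and moving from A along c shows \<open>\<Phi>\<^sub>A\<^sup>@(b) = \<infinity>\<close>. So finiteness of \<open>\<Phi>\<^sub>A\<^sup>@(b)\<close> forces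
\<open>\<Phi>\<^sub>A(b) \<ge> q(b)\<close>, and together with \<open>\<Phi>\<^sub>A \<le> \<Phi>\<^sub>A\<^sup>@\<close> and the Fenchel--Young inequality
\<open>\<Phi>\<^sub>A(b) + \<Phi>\<^sub>A\<^sup>@(b) = 2q(b)\<close> becomes equivalent to \<open>\<Phi>\<^sub>A\<^sup>@(b) = q(b)\<close>.\<close>

lemma SSD_space_symmetric: "SSD_space s \<Longrightarrow> s b c = s c b"
  unfolding SSD_space_def by blast

lemma SSD_space_bilinear: "SSD_space s \<Longrightarrow> bilinear s"
  unfolding bilinear_def SSD_space_def by (metis (no_types, lifting) ext)

lemma nonneg_if_nonneg_perturbed:
  fixes a b :: real
  assumes "\<And>u. 0 < u \<Longrightarrow> u \<le> 1 \<Longrightarrow> 0 \<le> a + u * b"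
  shows "0 \<le> a"
proof (rule tendsto_lowerbound)
  show "((\<lambda>u. a + u * b) \<longlongrightarrow> a) (at_right 0)"
    by (rule tendsto_eq_intros | simp)+
  show "\<forall>\<^sub>F u in at_right 0. 0 \<le> a + u * b"
    using assms by (auto simp: eventually_at_right_field intro: exI[of _ 1])
qed simp

lemma minimizing_sequence_convergent:
  fixes f :: "'i \<Rightarrow> 'a::real_vector \<Rightarrow> real"
  assumes lin: "\<And>i. linear (f i)" and K: "convex K" and I: "finite I" "i \<in> I"
    and xs: "\<And>k. xs k \<in> K"
    and lower: "\<And>x. x \<in> K \<Longrightarrow> D \<le> (\<Sum>j\<in>I. (f j x)\<^sup>2)"
    and lim: "(\<lambda>k. \<Sum>j\<in>I. (f j (xs k))\<^sup>2) \<longlonglongrightarrow> D"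
  shows "convergent (\<lambda>k. f i (xs k))"
proof -
  define N where "N x = (\<Sum>j\<in>I. (f j x)\<^sup>2)" for x
  have parallelogram: "(f i x - f i y)\<^sup>2 \<le> 2 * N x + 2 * N y - 4 * D"
    if "x \<in> K" "y \<in> K" for x y
  proof -
    define m where "m = (1/2) *\<^sub>R x + (1/2) *\<^sub>R y"
    have "m \<in> K" unfolding m_def using K that by (intro convexD) auto
    have fm: "f j m = (f j x + f j y) / 2" for j
      unfolding m_def using lin[of j] by (simp add: linear_add linear_scale)
    have "(f i x - f i y)\<^sup>2 \<le> (\<Sum>j\<in>I. (f j x - f j y)\<^sup>2)"
      by (rule member_le_sum[OF I(2) _ I(1)]) simp
    also have "\<dots> = (\<Sum>j\<in>I. 2 * (f j x)\<^sup>2 + 2 * (f j y)\<^sup>2 - 4 * (f j m)\<^sup>2)"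
      by (intro sum.cong refl) (simp add: fm power2_eq_square algebra_simps)
    also have "\<dots> = 2 * N x + 2 * N y - 4 * N m"
      unfolding N_def by (simp add: sum.distrib sum_subtractf sum_distrib_left)
    finally show ?thesis using lower[OF \<open>m \<in> K\<close>] unfolding N_def by simp
  qed
  have "Cauchy (\<lambda>k. f i (xs k))"
  proof (rule metric_CauchyI)
    fix e :: real assume "e > 0"
    then have "\<forall>\<^sub>F k in sequentially. N (xs k) < D + e\<^sup>2 / 4"
      using lim unfolding N_def by (intro order_tendstoD) auto
    then obtain M where M: "\<And>k. k \<ge> M \<Longrightarrow> N (xs k) < D + e\<^sup>2 / 4"
      unfolding eventually_sequentially by blast
    have "\<bar>f i (xs m) - f i (xs n)\<bar> < e" if "m \<ge> M" "n \<ge> M" for m n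
    proof -
      have "\<bar>f i (xs m) - f i (xs n)\<bar>\<^sup>2 < e\<^sup>2"
        using parallelogram[OF xs xs, of m n] M[OF that(1)] M[OF that(2)] by simp
      then show ?thesis using \<open>e > 0\<close> by (metis less_imp_le power2_less_imp_less)
    qed
    then show "\<exists>M. \<forall>m\<ge>M. \<forall>n\<ge>M. dist (f i (xs m)) (f i (xs n)) < e"
      by (auto simp: dist_real_def)
  qed
  then show ?thesis by (rule Cauchy_convergent)
qed

lemma minimal_limit_variational_inequality:
  fixes f :: "'i \<Rightarrow> 'a::real_vector \<Rightarrow> real"
  assumes lin: "\<And>i. linear (f i)" and K: "convex K" and I: "finite I"
    and xs: "\<And>k. xs k \<in> K" and L: "\<And>i. i \<in> I \<Longrightarrow> (\<lambda>k. f i (xs k)) \<longlonglongrightarrow> L i"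
    and lower: "\<And>y. y \<in> K \<Longrightarrow> (\<Sum>i\<in>I. (L i)\<^sup>2) \<le> (\<Sum>i\<in>I. (f i y)\<^sup>2)"
    and x: "x \<in> K"
  shows "(\<Sum>i\<in>I. (L i)\<^sup>2) \<le> (\<Sum>i\<in>I. L i * f i x)"
proof -
  define P where "P = (\<Sum>i\<in>I. L i * (f i x - L i))"
  define Q where "Q = (\<Sum>i\<in>I. (f i x - L i)\<^sup>2)"
  have "0 \<le> 2 * P + u * Q" if u: "0 < u" "u \<le> 1" for u
  proof -
    define p where "p k = (1 - u) *\<^sub>R xs k + u *\<^sub>R x" for k
    have "p k \<in> K" for k unfolding p_def using K xs x u by (intro convexD) auto
    have fp: "f i (p k) = (1 - u) * f i (xs k) + u * f i x" for i k
      unfolding p_def using lin[of i] by (simp add: linear_add linear_scale)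
    have "(\<lambda>k. \<Sum>i\<in>I. (f i (p k))\<^sup>2) \<longlonglongrightarrow> (\<Sum>i\<in>I. ((1 - u) * L i + u * f i x)\<^sup>2)"
      unfolding fp by (intro tendsto_sum tendsto_intros L)
    then have "(\<Sum>i\<in>I. (L i)\<^sup>2) \<le> (\<Sum>i\<in>I. ((1 - u) * L i + u * f i x)\<^sup>2)"
      using lower \<open>\<And>k. p k \<in> K\<close> by (intro LIMSEQ_le_const) auto
    also have "\<dots> = (\<Sum>i\<in>I. (L i)\<^sup>2 + 2 * u * (L i * (f i x - L i)) + u\<^sup>2 * (f i x - L i)\<^sup>2)"
      by (intro sum.cong refl) (simp add: power2_eq_square algebra_simps)
    also have "\<dots> = (\<Sum>i\<in>I. (L i)\<^sup>2) + 2 * u * P + u\<^sup>2 * Q"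
      unfolding P_def Q_def by (simp add: sum.distrib sum_distrib_left)
    finally have "0 \<le> u * (2 * P + u * Q)" by (simp add: power2_eq_square algebra_simps)
    then show ?thesis using u by (simp add: zero_le_mult_iff)
  qed
  then have "0 \<le> P" using nonneg_if_nonneg_perturbed[of "2 * P" Q] by simp
  moreover have "(\<Sum>i\<in>I. L i * f i x) = P + (\<Sum>i\<in>I. (L i)\<^sup>2)"
    unfolding P_def by (simp add: sum.distrib[symmetric] power2_eq_square algebra_simps)
  ultimately show ?thesis by simp
qed

lemma linear_functionals_separate_convex:
  fixes f :: "'i \<Rightarrow> 'a::real_vector \<Rightarrow> real"
  assumes lin: "\<And>i. linear (f i)" and K: "convex K" "K \<noteq> {}" and I: "finite I"
    and \<epsilon>: "\<epsilon> > 0" and far: "\<And>x. x \<in> K \<Longrightarrow> \<exists>i\<in>I. \<epsilon> \<le> \<bar>f i x\<bar>"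
  obtains w where "\<epsilon>\<^sup>2 \<le> (\<Sum>i\<in>I. (w i)\<^sup>2)" "\<And>x. x \<in> K \<Longrightarrow> (\<Sum>i\<in>I. (w i)\<^sup>2) \<le> (\<Sum>i\<in>I. w i * f i x)"
proof -
  define N where "N x = (\<Sum>i\<in>I. (f i x)\<^sup>2)" for x
  define D where "D = Inf (N ` K)"
  have "\<epsilon>\<^sup>2 \<le> N x" if x: "x \<in> K" for x
  proof -
    obtain i where "i \<in> I" "\<epsilon> \<le> \<bar>f i x\<bar>" using far[OF x] by blast
    then have "\<epsilon>\<^sup>2 \<le> (f i x)\<^sup>2" using \<epsilon> by (simp add: abs_le_square_iff[symmetric])
    also have "\<dots> \<le> N x" unfolding N_def by (rule member_le_sum[OF \<open>i \<in> I\<close> _ I]) simp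
    finally show ?thesis .
  qed
  then have "\<epsilon>\<^sup>2 \<le> D" unfolding D_def using K(2) by (intro cInf_greatest) auto
  have bdd: "bdd_below (N ` K)"
    unfolding N_def by (auto intro!: bdd_belowI[where m=0] sum_nonneg)
  then have lower: "D \<le> N x" if "x \<in> K" for x unfolding D_def using that by (auto intro: cInf_lower)
  have "D \<in> closure (N ` K)" unfolding D_def using bdd K(2) by (intro closure_contains_Inf) auto
  then obtain ys where ys: "\<And>k. ys k \<in> N ` K" and "ys \<longlonglongrightarrow> D"
    unfolding closure_sequential by blast
  have "\<forall>k. \<exists>x. x \<in> K \<and> ys k = N x" using ys by blast
  then obtain xs where xs: "\<And>k. xs k \<in> K" and ys_eq: "\<And>k. ys k = N (xs k)" by metis
  have "ys = (\<lambda>k. N (xs k))" by (intro ext ys_eq)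
  with \<open>ys \<longlonglongrightarrow> D\<close> have lim: "(\<lambda>k. N (xs k)) \<longlonglongrightarrow> D" by simp
  txt \<open>L is the point of least norm in the closure of the image of K under the \<open>f i\<close>;
    the variational inequality at L is the separation.\<close>
  have "convergent (\<lambda>k. f i (xs k))" if "i \<in> I" for i
    using xs lower lim unfolding N_def
    by (rule minimizing_sequence_convergent[OF lin K(1) I that, where xs=xs])
  then obtain L where L: "\<And>i. i \<in> I \<Longrightarrow> (\<lambda>k. f i (xs k)) \<longlonglongrightarrow> L i"
    unfolding convergent_def by metis
  have "(\<lambda>k. N (xs k)) \<longlonglongrightarrow> (\<Sum>i\<in>I. (L i)\<^sup>2)" unfolding N_def by (intro tendsto_intros L)
  then have D_eq: "D = (\<Sum>i\<in>I. (L i)\<^sup>2)" using lim by (rule LIMSEQ_unique[rotated])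
  show ?thesis
  proof (rule that)
    show "\<epsilon>\<^sup>2 \<le> (\<Sum>i\<in>I. (L i)\<^sup>2)" using \<open>\<epsilon>\<^sup>2 \<le> D\<close> D_eq by simp
    have L_lower: "(\<Sum>i\<in>I. (L i)\<^sup>2) \<le> (\<Sum>i\<in>I. (f i y)\<^sup>2)" if "y \<in> K" for y
      using lower[OF that] D_eq unfolding N_def by simp
    show "(\<Sum>i\<in>I. (L i)\<^sup>2) \<le> (\<Sum>i\<in>I. L i * f i x)" if "x \<in> K" for x
      using minimal_limit_variational_inequality[OF lin K(1) I, where xs=xs, OF xs L L_lower that] .
  qed
qed

lemma wtop_openin_contains_basic_nbhd:
  assumes "openin (wtop s) U" "z \<in> U"
  obtains F \<epsilon> where "finite F" "\<epsilon> > 0" "{x. \<forall>c\<in>F. \<bar>s x c - s z c\<bar> < \<epsilon>} \<subseteq> U"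
proof -
  have "generate_topology_on {{b. s b c \<in> V} | c V. open V} U"
    using assms(1) unfolding wtop_def by (rule openin_topology_generated_by)
  then have "\<exists>F \<epsilon>. finite F \<and> \<epsilon> > 0 \<and> {x. \<forall>c\<in>F. \<bar>s x c - s z c\<bar> < \<epsilon>} \<subseteq> U"
    using assms(2)
  proof (induction arbitrary: z)
    case Empty
    then show ?case by simp
  next
    case (Int U V)
    obtain F1 e1 where "finite F1" "e1 > 0" "{x. \<forall>c\<in>F1. \<bar>s x c - s z c\<bar> < e1} \<subseteq> U"
      using Int.IH(1) Int.prems by blast
    moreover obtain F2 e2 where "finite F2" "e2 > 0" "{x. \<forall>c\<in>F2. \<bar>s x c - s z c\<bar> < e2} \<subseteq> V"
      using Int.IH(2) Int.prems by blast
    ultimately show ?case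
      by (intro exI[of _ "F1 \<union> F2"] exI[of _ "min e1 e2"]) auto
  next
    case (UN \<U>)
    then obtain U where "U \<in> \<U>" "z \<in> U" by blast
    with UN.IH[of U z] show ?case by blast
  next
    case (Basis S)
    then obtain c V where S: "S = {b. s b c \<in> V}" "open V" by blast
    with Basis have "s z c \<in> V" by simp
    then obtain e where "e > 0" "ball (s z c) e \<subseteq> V"
      using S(2) open_contains_ball by blast
    then show ?case
      by (intro exI[of _ "{c}"] exI[of _ e]) (auto simp: S dist_real_def abs_minus_commute)
  qed
  then show ?thesis using that by blast
qed

lemma not_in_convw_far_from_convex_hull:
  assumes "b \<notin> convw s A"
  obtains F \<epsilon> where "finite F" "\<epsilon> > 0" "\<And>x. x \<in> convex hull A \<Longrightarrow> \<exists>c\<in>F. \<epsilon> \<le> \<bar>s x c - s b c\<bar>"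
proof -
  have "topspace (wtop s) = UNIV"
    unfolding wtop_def by (auto intro!: exI[of _ 0] exI[of _ UNIV])
  then obtain T where T: "b \<in> T" "openin (wtop s) T" "T \<inter> convex hull A = {}"
    using assms unfolding convw_def in_closure_of by blast
  obtain F \<epsilon> where "finite F" "\<epsilon> > 0" "{x. \<forall>c\<in>F. \<bar>s x c - s b c\<bar> < \<epsilon>} \<subseteq> T"
    using wtop_openin_contains_basic_nbhd[OF T(2,1)] by blast
  then show ?thesis using that T(3) by force
qed

lemma not_in_convw_separated:
  assumes bil: "bilinear s" and A: "A \<noteq> {}" and b: "b \<notin> convw s A"
  obtains c d where "d > 0" "\<And>x. x \<in> convex hull A \<Longrightarrow> s x c + d \<le> s b c"
proof -
  obtain F \<epsilon> where F: "finite F" "\<epsilon> > 0" and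
    far: "\<And>x. x \<in> convex hull A \<Longrightarrow> \<exists>c\<in>F. \<epsilon> \<le> \<bar>s x c - s b c\<bar>"
    using not_in_convw_far_from_convex_hull[OF b] by blast
  let ?K = "(\<lambda>x. x - b) ` (convex hull A)"
  have lin: "linear (\<lambda>x. s x c)" for c using bil unfolding bilinear_def by blast
  have "convex ?K" by (intro convex_translation_subtract convex_convex_hull)
  moreover have "?K \<noteq> {}" using A by simp
  moreover have "\<exists>c\<in>F. \<epsilon> \<le> \<bar>s y c\<bar>" if "y \<in> ?K" for y
    using that far bilinear_lsub[OF bil] by auto
  ultimately obtain w where w: "\<epsilon>\<^sup>2 \<le> (\<Sum>c\<in>F. (w c)\<^sup>2)"
    and sep: "\<And>y. y \<in> ?K \<Longrightarrow> (\<Sum>c\<in>F. (w c)\<^sup>2) \<le> (\<Sum>c\<in>F. w c * s y c)"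
    using linear_functionals_separate_convex[of "\<lambda>c x. s x c", OF lin _ _ F] by blast
  define c0 where "c0 = (\<Sum>c\<in>F. w c *\<^sub>R c)"
  have sc0: "s y c0 = (\<Sum>c\<in>F. w c * s y c)" for y
    unfolding c0_def using bil unfolding bilinear_def by (simp add: linear_sum linear_scale)
  show ?thesis
  proof (rule that)
    show "\<epsilon>\<^sup>2 > 0" using F by simp
    show "s x (- c0) + \<epsilon>\<^sup>2 \<le> s b (- c0)" if "x \<in> convex hull A" for x
      using sep[of "x - b"] that w bilinear_lsub[OF bil] bilinear_rneg[OF bil]
      unfolding sc0[symmetric] by auto
  qed
qed

lemma q_positive_bound:
  assumes bil: "bilinear s" and sym: "\<And>b c. s b c = s c b"
    and "q_positive s A" "a \<in> A" "a' \<in> A"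
  shows "s a a' - qf s a' \<le> qf s a"
proof -
  have "0 \<le> qf s (a - a')" using assms(3-) unfolding q_positive_def by blast
  also have "qf s (a - a') = qf s a - s a a' + qf s a'"
    unfolding qf_def bilinear_lsub[OF bil] bilinear_rsub[OF bil] sym[of a' a] by simp
  finally show ?thesis by simp
qed

lemma PhiA_eq_qf:
  assumes bil: "bilinear s" and sym: "\<And>b c. s b c = s c b"
    and A: "q_positive s A" and a: "a \<in> A"
  shows "PhiA s A a = ereal (qf s a)"
  unfolding PhiA_def
proof (rule antisym)
  show "(SUP a'\<in>A. ereal (s a a' - qf s a')) \<le> ereal (qf s a)"
    using q_positive_bound[OF bil sym A a] by (intro SUP_least) auto
  have "ereal (qf s a) = ereal (s a a - qf s a)" unfolding qf_def by simp
  also have "\<dots> \<le> (SUP a'\<in>A. ereal (s a a' - qf s a'))" using a by (rule SUP_upper)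
  finally show "ereal (qf s a) \<le> (SUP a'\<in>A. ereal (s a a' - qf s a'))" .
qed

lemma fenchel_young: "ereal (s b b) - f b \<le> fenchel_at s f b"
  unfolding fenchel_at_def by (rule SUP_upper2[where i=b]) auto

lemma PhiA_le_fenchel:
  assumes bil: "bilinear s" and sym: "\<And>b c. s b c = s c b" and A: "q_positive s A"
  shows "PhiA s A b \<le> fenchel_at s (PhiA s A) b"
  unfolding PhiA_def[of s A b]
proof (rule SUP_least)
  fix a assume a: "a \<in> A"
  have "ereal (s b a - qf s a) = ereal (s a b) - PhiA s A a"
    using PhiA_eq_qf[OF bil sym A a] sym by simp
  also have "\<dots> \<le> fenchel_at s (PhiA s A) b"
    unfolding fenchel_at_def by (rule SUP_upper) simp
  finally show "ereal (s b a - qf s a) \<le> fenchel_at s (PhiA s A) b" .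
qed

lemma fenchel_PhiA_outside_convw:
  assumes bil: "bilinear s" and sym: "\<And>b c. s b c = s c b"
    and A: "q_positive s A" and b: "b \<notin> convw s A"
  shows "fenchel_at s (PhiA s A) b = \<infinity>"
proof -
  obtain a0 where a0: "a0 \<in> A" using A unfolding q_positive_def by blast
  then obtain c d where "d > 0" and sep_hull: "\<And>x. x \<in> convex hull A \<Longrightarrow> s x c + d \<le> s b c"
    using not_in_convw_separated[OF bil _ b] by blast
  have sep: "s a c + d \<le> s b c" if "a \<in> A" for a
    using sep_hull[OF hull_inc[OF that]] .
  have lower: "ereal (s a0 b - qf s a0 + \<tau> * d) \<le> fenchel_at s (PhiA s A) b" if "\<tau> \<ge> 0" for \<tau>
  proof -
    define x where "x = a0 + \<tau> *\<^sub>R c"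
    have sx: "s x y = s a0 y + \<tau> * s y c" for y
      unfolding x_def bilinear_ladd[OF bil] bilinear_lmul[OF bil] sym[of c] by simp
    have "PhiA s A x \<le> ereal (qf s a0 + \<tau> * (s b c - d))"
      unfolding PhiA_def
    proof (rule SUP_least)
      fix a assume a: "a \<in> A"
      have "\<tau> * s a c \<le> \<tau> * (s b c - d)" using sep[OF a] \<open>\<tau> \<ge> 0\<close> by (simp add: mult_left_mono)
      then show "ereal (s x a - qf s a) \<le> ereal (qf s a0 + \<tau> * (s b c - d))"
        using q_positive_bound[OF bil sym A a0 a] sx[of a] by simp
    qed
    then have "ereal (s x b) - ereal (qf s a0 + \<tau> * (s b c - d)) \<le> ereal (s x b) - PhiA s A x"
      by (rule ereal_minus_mono[OF order_refl])
    also have "\<dots> \<le> fenchel_at s (PhiA s A) b"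
      unfolding fenchel_at_def by (rule SUP_upper) simp
    finally have "ereal (s x b - (qf s a0 + \<tau> * (s b c - d))) \<le> fenchel_at s (PhiA s A) b"
      by simp
    moreover have "s x b - (qf s a0 + \<tau> * (s b c - d)) = s a0 b - qf s a0 + \<tau> * d"
      unfolding sx sym[of b c] by (simp add: algebra_simps)
    ultimately show ?thesis by simp
  qed
  show ?thesis
  proof (rule ereal_top)
    fix r :: real
    define \<tau> where "\<tau> = max 0 ((r - (s a0 b - qf s a0)) / d)"
    have "(r - (s a0 b - qf s a0)) / d \<le> \<tau>" unfolding \<tau>_def by simp
    then have "r \<le> s a0 b - qf s a0 + \<tau> * d" using \<open>d > 0\<close> by (simp add: pos_divide_le_eq)
    then have "ereal r \<le> ereal (s a0 b - qf s a0 + \<tau> * d)" by simp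
    also have "\<dots> \<le> fenchel_at s (PhiA s A) b" by (rule lower) (simp add: \<tau>_def)
    finally show "ereal r \<le> fenchel_at s (PhiA s A) b" .
  qed
qed

lemma Gf_eq_Pq_fenchel:
  assumes not_minf: "\<And>b. f b \<noteq> -\<infinity>" and below: "\<And>b. f b \<le> fenchel_at s f b"
    and above_q: "\<And>b. fenchel_at s f b \<noteq> \<infinity> \<Longrightarrow> ereal (qf s b) \<le> f b"
  shows "Gf s f = Pq s (fenchel_at s f)"
proof (intro set_eqI iffI)
  fix b assume "b \<in> Gf s f"
  then have G: "f b + fenchel_at s f b = ereal (s b b)" unfolding Gf_def by simp
  obtain p where p: "f b = ereal p" using G not_minf[of b] by (cases "f b") auto
  obtain r where r: "fenchel_at s f b = ereal r"
    using G below[of b] p by (cases "fenchel_at s f b") auto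
  have "qf s b \<le> p" "p \<le> r" "p + r = 2 * qf s b"
    using above_q[of b] below[of b] G p r by (auto simp: qf_def)
  then show "b \<in> Pq s (fenchel_at s f)" unfolding Pq_def using r by simp
next
  fix b assume "b \<in> Pq s (fenchel_at s f)"
  then have R: "fenchel_at s f b = ereal (qf s b)" unfolding Pq_def by simp
  obtain p where p: "f b = ereal p" using below[of b] R not_minf[of b] by (cases "f b") auto
  have "p = qf s b" using below[of b] fenchel_young[of s b f] R p by (simp add: qf_def)
  then show "b \<in> Gf s f" unfolding Gf_def using R p by (simp add: qf_def)
qed

theorem mainTheorem11:
  fixes s :: "'a::real_vector \<Rightarrow> 'a \<Rightarrow> real" and A :: "'a set"
  assumes "SSD_space s"
    and "q_positive s A"
    and "\<forall>b\<in>convw s A. PhiA s A b \<ge> ereal (qf s b)"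
  shows "Gf s (PhiA s A) = Pq s (fenchel_at s (PhiA s A))"
proof (rule Gf_eq_Pq_fenchel)
  have bil: "bilinear s" and sym: "\<And>b c. s b c = s c b"
    using SSD_space_bilinear SSD_space_symmetric assms(1) by blast+
  obtain a where "a \<in> A" using assms(2) unfolding q_positive_def by blast
  then have "ereal (s b a - qf s a) \<le> PhiA s A b" for b
    unfolding PhiA_def by (rule SUP_upper)
  then show "PhiA s A b \<noteq> -\<infinity>" for b
    by (metis MInfty_neq_ereal(1) ereal_infty_less_eq(2))
  show "PhiA s A b \<le> fenchel_at s (PhiA s A) b" for b
    using PhiA_le_fenchel[OF bil sym assms(2)] .
  show "ereal (qf s b) \<le> PhiA s A b" if "fenchel_at s (PhiA s A) b \<noteq> \<infinity>" for b
    using fenchel_PhiA_outside_convw[OF bil sym assms(2)] assms(3) that by blast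
qed

end
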